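(* Let $t>0$. There exists a sequence $(t_n)$ with $t_n\to t$ such that for all $u,v\in\mathcal D$: if $(q_n^{(u,v)})$ converges in $(\mathcal D,d)$, then $\lim_n \Delta q_n^{(u,v)}(t_n)=\Delta\big(\lim_n q_n^{(u,v)}\big)(t)$.
   Context: Let $\pi=(\pi_n)_{n\ge1}$ be a sequence of partitions $\pi_n=(t^n_0,\dots,t^n_{k_n})$ with $0=t^n_0<\dots<t^n_{k_n}<\infty$, $t^n_{k_n}\uparrow\infty$, and mesh tending to $0$ on compacts; sums over $i$ run over $0\le i<k_n$. $\mathcal D$ is the space of càdlàg functions $[0,\infty)\to\mathbb R$ with a metric $d$ inducing the Skorokhod $J_1$ topology. For $f\in\mathcal D$, $\Delta f(s)=f(s)-f(s-)$. For $u,v\in\mathcal D$: $q_n^{(u,v)}(s)=\sum_{i:\,t^n_i\le s}(u(t^n_{i+1})-u(t^n_i))(v(t^n_{i+1})-v(t^n_i))$. *)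

theory Defs
  imports "HOL-Analysis.Analysis"
begin

text \<open>A sequence of partitions: pt n i = t^n_i for i \<le> k n.\<close>
definition partition_seq :: "(nat \<Rightarrow> nat \<Rightarrow> real) \<Rightarrow> (nat \<Rightarrow> nat) \<Rightarrow> bool" where
  "partition_seq pt k \<longleftrightarrow>
     (\<forall>n. pt n 0 = 0) \<and>
     (\<forall>n i. i < k n \<longrightarrow> pt n i < pt n (Suc i)) \<and>
     mono (\<lambda>n. pt n (k n)) \<and>
     filterlim (\<lambda>n. pt n (k n)) at_top sequentially \<and>
     (\<forall>T>0. \<forall>e>0. \<forall>\<^sub>F n in sequentially.
         \<forall>i<k n. pt n i \<le> T \<longrightarrow> pt n (Suc i) - pt n i < e)"

text \<open>Cadlag functions on [0,oo) (values on negative reals are irrelevant).\<close>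
definition cadlag :: "(real \<Rightarrow> real) \<Rightarrow> bool" where
  "cadlag f \<longleftrightarrow> (\<forall>s\<ge>0. (f \<longlongrightarrow> f s) (at_right s)) \<and>
                 (\<forall>s>0. \<exists>l. (f \<longlongrightarrow> l) (at_left s))"

text \<open>Jump Delta f(s) = f(s) - f(s-), with the convention f(0-) = f(0).\<close>
definition jump :: "(real \<Rightarrow> real) \<Rightarrow> real \<Rightarrow> real" where
  "jump f s = (if s \<le> 0 then 0 else f s - Lim (at_left s) f)"

definition time_change :: "(real \<Rightarrow> real) \<Rightarrow> bool" where
  "time_change l \<longleftrightarrow> l 0 = 0 \<and> continuous_on {0..} l \<and> strict_mono_on {0..} l \<and>
                      l ` {0..} = {0..}"

text \<open>Convergence in the Skorokhod J1 topology on D[0,oo)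
  (Jacod--Shiryaev, Thm VI.1.14).\<close>
definition J1_conv :: "(nat \<Rightarrow> real \<Rightarrow> real) \<Rightarrow> (real \<Rightarrow> real) \<Rightarrow> bool" where
  "J1_conv fs f \<longleftrightarrow> (\<exists>lam. (\<forall>n. time_change (lam n)) \<and>
      (\<forall>e>0. \<forall>\<^sub>F n in sequentially. \<forall>s\<ge>0. \<bar>lam n s - s\<bar> < e) \<and>
      (\<forall>T\<ge>0. \<forall>e>0. \<forall>\<^sub>F n in sequentially. \<forall>s\<in>{0..T}. \<bar>fs n (lam n s) - f s\<bar> < e))"

definition qcov :: "(nat \<Rightarrow> nat \<Rightarrow> real) \<Rightarrow> (nat \<Rightarrow> nat) \<Rightarrow> nat \<Rightarrow>
                     (real \<Rightarrow> real) \<Rightarrow> (real \<Rightarrow> real) \<Rightarrow> real \<Rightarrow> real" where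
  "qcov pt k n u v s = (\<Sum>i\<in>{i. i < k n \<and> pt n i \<le> s}.
      (u (pt n (Suc i)) - u (pt n i)) * (v (pt n (Suc i)) - v (pt n i)))"

end

(* Take t_n to be the last point of the n-th partition strictly before t. The jump of q_n at a
   partition point t^n_i is the single product of increments over [t^n_i, t^n_(i+1)]. At t_n that
   interval shrinks onto t from the left, so the jump tends to c = Delta u(t) Delta v(t); every other
   interval near t lies on one side of t, where the oscillation of the cadlag functions u, v is
   small, so all other jumps of q_n near t are uniformly small.
   If q_n -> q in J1 with time changes lam_n, then Delta q_n(lam_n s_n) - Delta q(s_n) -> 0 whenever
   s_n -> t. For c = 0 take s_n = t: the jumps of q_n at lam_n t tend both to 0 and to Delta q(t).
   For c <> 0 take s_n = lam_n^-1 t_n: then Delta q(s_n) -> c, and since the jumps of q at points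
   near but different from t tend to 0, eventually s_n = t. *)

theory Submission
  imports Defs
begin

lemma partition_seq_less:
  assumes ps: "partition_seq pt k" and "i < j" and "j \<le> k n"
  shows "pt n i < pt n j"
  using assms(2,3)
proof (induction j)
  case 0
  then show ?case by simp
next
  case (Suc j)
  have "pt n j < pt n (Suc j)"
    using ps Suc.prems unfolding partition_seq_def by auto
  with Suc show ?case
    by (cases "i = j") force+
qed

lemma partition_seq_le:
  assumes "partition_seq pt k" and "i \<le> j" and "j \<le> k n"
  shows "pt n i \<le> pt n j"
  using partition_seq_less[OF assms(1) _ assms(3), of i] assms(2)
  by (cases "i = j") auto

lemma partition_seq_nonneg:
  assumes ps: "partition_seq pt k" and "i \<le> k n"
  shows "pt n i \<ge> 0"
  using partition_seq_le[OF ps _ assms(2), of 0] ps unfolding partition_seq_def by simp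

lemma partition_seq_mesh:
  assumes "partition_seq pt k" and "T > 0" and "e > 0"
  shows "\<forall>\<^sub>F n in sequentially. \<forall>i<k n. pt n i \<le> T \<longrightarrow> pt n (Suc i) - pt n i < e"
  using assms unfolding partition_seq_def by blast

definition last_before :: "(nat \<Rightarrow> nat \<Rightarrow> real) \<Rightarrow> (nat \<Rightarrow> nat) \<Rightarrow> real \<Rightarrow> nat \<Rightarrow> nat" where
  "last_before pt k t n = Max {i. i \<le> k n \<and> pt n i < t}"

lemma last_before:
  assumes ps: "partition_seq pt k" and t: "t > 0"
  shows "last_before pt k t n \<le> k n" and "pt n (last_before pt k t n) < t"
    and "j \<le> k n \<Longrightarrow> pt n j < t \<Longrightarrow> j \<le> last_before pt k t n"
proof -
  let ?S = "{i. i \<le> k n \<and> pt n i < t}"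
  have "0 \<in> ?S"
    using ps t unfolding partition_seq_def by simp
  then have "last_before pt k t n \<in> ?S"
    unfolding last_before_def by (intro Max_in) auto
  then show "last_before pt k t n \<le> k n" and "pt n (last_before pt k t n) < t"
    by auto
  show "j \<le> k n \<Longrightarrow> pt n j < t \<Longrightarrow> j \<le> last_before pt k t n"
    unfolding last_before_def by (intro Max_ge) auto
qed

lemma last_before_straddles:
  assumes ps: "partition_seq pt k" and t: "t > 0" and "t \<le> pt n (k n)"
  shows "last_before pt k t n < k n" and "t \<le> pt n (Suc (last_before pt k t n))"
proof -
  show lt: "last_before pt k t n < k n"
    using last_before(1,2)[OF ps t, of n] assms(3) by (cases "last_before pt k t n = k n") auto
  show "t \<le> pt n (Suc (last_before pt k t n))"
    using last_before(3)[OF ps t, of "Suc (last_before pt k t n)" n] lt by fastforce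
qed

lemma eventually_last_before_straddles:
  assumes ps: "partition_seq pt k" and t: "t > 0"
  shows "\<forall>\<^sub>F n in sequentially.
           last_before pt k t n < k n \<and> t \<le> pt n (Suc (last_before pt k t n))"
proof -
  have "\<forall>\<^sub>F n in sequentially. t \<le> pt n (k n)"
    using ps unfolding partition_seq_def filterlim_at_top by blast
  then show ?thesis
    by (rule eventually_mono) (use last_before_straddles[OF ps t] in blast)
qed

lemma last_before_tendsto:
  assumes ps: "partition_seq pt k" and t: "t > 0"
  shows "(\<lambda>n. pt n (last_before pt k t n)) \<longlonglongrightarrow> t"
    and "(\<lambda>n. pt n (Suc (last_before pt k t n))) \<longlonglongrightarrow> t"
proof -
  let ?a = "\<lambda>n. pt n (last_before pt k t n)" and ?b = "\<lambda>n. pt n (Suc (last_before pt k t n))"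
  have close: "\<forall>\<^sub>F n in sequentially. dist (?a n) t < e \<and> dist (?b n) t < e" if e: "e > 0" for e
    using partition_seq_mesh[OF ps t e] eventually_last_before_straddles[OF ps t]
  proof eventually_elim
    case (elim n)
    with last_before(2)[OF ps t, of n] show ?case
      by (auto simp: dist_real_def)
  qed
  show "?a \<longlonglongrightarrow> t" and "?b \<longlonglongrightarrow> t"
    by (rule tendstoI, erule eventually_mono[OF close], simp)+
qed

lemma partition_interval_one_sided:
  assumes ps: "partition_seq pt k" and t: "t > 0" and D: "D > 0"
  shows "\<forall>\<^sub>F n in sequentially. \<forall>j<k n. \<bar>pt n j - t\<bar> < D/2 \<longrightarrow> j \<noteq> last_before pt k t n \<longrightarrow>
           (pt n j \<in> {t-D<..<t} \<and> pt n (Suc j) \<in> {t-D<..<t}) \<or>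
           (pt n j \<in> {t..<t+D} \<and> pt n (Suc j) \<in> {t..<t+D})"
  using partition_seq_mesh[OF ps add_pos_pos[OF t D] half_gt_zero[OF D]]
proof eventually_elim
  case (elim n)
  show ?case
  proof (intro allI impI)
    fix j
    assume j: "j < k n" "\<bar>pt n j - t\<bar> < D/2" "j \<noteq> last_before pt k t n"
    have step: "pt n j < pt n (Suc j)"
      using ps j(1) unfolding partition_seq_def by blast
    show "(pt n j \<in> {t-D<..<t} \<and> pt n (Suc j) \<in> {t-D<..<t}) \<or>
          (pt n j \<in> {t..<t+D} \<and> pt n (Suc j) \<in> {t..<t+D})"
    proof (cases "pt n j < t")
      case True
      then have "Suc j \<le> last_before pt k t n"
        using last_before(3)[OF ps t, of j n] j by simp
      then have "pt n (Suc j) \<le> pt n (last_before pt k t n)"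
        by (rule partition_seq_le[OF ps _ last_before(1)[OF ps t]])
      with last_before(2)[OF ps t, of n] True j(2) step show ?thesis
        by auto
    next
      case False
      with elim j step show ?thesis
        by auto
    qed
  qed
qed

lemma jump_eq_if_tendsto_at_left:
  assumes "(f \<longlongrightarrow> L) (at_left s)" and "s > 0"
  shows "jump f s = f s - L"
  using assms tendsto_Lim[OF trivial_limit_at_left_real assms(1)] unfolding jump_def by simp

lemma cadlag_tendsto_at_left:
  assumes f: "cadlag f" and s: "s > 0"
  shows "(f \<longlongrightarrow> f s - jump f s) (at_left s)"
proof -
  obtain l where l: "(f \<longlongrightarrow> l) (at_left s)"
    using f s unfolding cadlag_def by auto
  with jump_eq_if_tendsto_at_left[OF l s] show ?thesis
    by simp
qed

lemma cadlag_continuous_within_Ici: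
  assumes "cadlag f" and "s \<ge> 0"
  shows "continuous (at s within {s..}) f"
  using assms unfolding continuous_within at_within_Ici_at_right cadlag_def by auto

lemma cadlag_increment_tendsto_jump:
  assumes f: "cadlag f" and t: "t > 0"
    and a: "filterlim a (at_left t) sequentially"
    and b: "b \<longlonglongrightarrow> t" "\<forall>\<^sub>F n in sequentially. b n \<ge> t"
  shows "(\<lambda>n. f (b n) - f (a n)) \<longlonglongrightarrow> jump f t"
proof -
  have "(\<lambda>n. f (b n)) \<longlonglongrightarrow> f t"
    using b by (intro continuous_within_tendsto_compose[OF cadlag_continuous_within_Ici[OF f]])
      (use t in auto)
  moreover have "(\<lambda>n. f (a n)) \<longlonglongrightarrow> f t - jump f t"
    by (rule filterlim_compose[OF cadlag_tendsto_at_left[OF f t] a])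
  ultimately show ?thesis
    using tendsto_diff by fastforce
qed

lemma cadlag_abs_jump_le:
  assumes f: "cadlag f" and s: "s > 0" and "a < s"
    and osc: "\<forall>x\<in>{a<..<s}. \<bar>f x - f s\<bar> \<le> e"
  shows "\<bar>jump f s\<bar> \<le> e"
proof -
  have "((\<lambda>x. \<bar>f x - f s\<bar>) \<longlongrightarrow> \<bar>jump f s\<bar>) (at_left s)"
    using tendsto_rabs[OF tendsto_diff[OF cadlag_tendsto_at_left[OF f s] tendsto_const[of "f s"]]]
    by simp
  moreover have "\<forall>\<^sub>F x in at_left s. \<bar>f x - f s\<bar> \<le> e"
    using eventually_at_left_real[OF \<open>a < s\<close>] by (rule eventually_mono) (use osc in blast)
  ultimately show ?thesis
    by (rule tendsto_upperbound) simp
qed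

lemma cadlag_oscillation_small:
  assumes f: "cadlag f" and t: "t > 0" and e: "e > 0"
  shows "\<exists>d>0. \<forall>x y. (x \<in> {t-d<..<t} \<and> y \<in> {t-d<..<t}) \<or> (x \<in> {t..<t+d} \<and> y \<in> {t..<t+d})
           \<longrightarrow> \<bar>f x - f y\<bar> < e"
proof -
  have e2: "e/2 > 0"
    using e by simp
  have "\<forall>\<^sub>F x in at_left t. dist (f x) (f t - jump f t) < e/2"
    using tendstoD[OF cadlag_tendsto_at_left[OF f t] e2] .
  then obtain a where a: "a < t" "\<forall>x\<in>{a<..<t}. \<bar>f x - (f t - jump f t)\<bar> < e/2"
    unfolding eventually_at_left_field dist_real_def by auto
  have "(f \<longlongrightarrow> f t) (at_right t)"
    using f t unfolding cadlag_def by simp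
  from tendstoD[OF this e2] have "\<forall>\<^sub>F x in at_right t. dist (f x) (f t) < e/2" .
  then obtain b where "b > t" "\<forall>x\<in>{t<..<b}. \<bar>f x - f t\<bar> < e/2"
    unfolding eventually_at_right_field dist_real_def by auto
  then have b: "b > t" "\<forall>x\<in>{t..<b}. \<bar>f x - f t\<bar> < e/2"
    using e by (auto simp: le_less)
  show ?thesis
  proof (intro exI[of _ "min (t - a) (b - t)"] conjI allI impI)
    fix x y
    assume "(x \<in> {t - min (t - a) (b - t)<..<t} \<and> y \<in> {t - min (t - a) (b - t)<..<t}) \<or>
            (x \<in> {t..<t + min (t - a) (b - t)} \<and> y \<in> {t..<t + min (t - a) (b - t)})"
    then show "\<bar>f x - f y\<bar> < e"
    proof (elim disjE conjE)
      assume "x \<in> {t - min (t - a) (b - t)<..<t}" "y \<in> {t - min (t - a) (b - t)<..<t}"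
      then have "\<bar>f x - (f t - jump f t)\<bar> < e/2" "\<bar>f y - (f t - jump f t)\<bar> < e/2"
        using a by auto
      then show ?thesis by linarith
    next
      assume "x \<in> {t..<t + min (t - a) (b - t)}" "y \<in> {t..<t + min (t - a) (b - t)}"
      then have "\<bar>f x - f t\<bar> < e/2" "\<bar>f y - f t\<bar> < e/2"
        using b by auto
      then show ?thesis by linarith
    qed
  qed (use a b in auto)
qed

lemma cadlag_jump_tendsto_0:
  assumes f: "cadlag f" and t: "t > 0"
  shows "(jump f \<longlongrightarrow> 0) (at t)"
proof (rule tendstoI)
  fix e :: real
  assume e: "e > 0"
  obtain d where d: "d > 0" and osc: "\<forall>x y. (x \<in> {t-d<..<t} \<and> y \<in> {t-d<..<t}) \<or>
      (x \<in> {t..<t+d} \<and> y \<in> {t..<t+d}) \<longrightarrow> \<bar>f x - f y\<bar> < e/2"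
    using cadlag_oscillation_small[OF f t, of "e/2"] e by auto
  have "\<bar>jump f s\<bar> \<le> e/2" if s: "s \<noteq> t" "\<bar>s - t\<bar> < min d t" for s
  proof (cases "s < t")
    case True
    with s show ?thesis
      by (intro cadlag_abs_jump_le[OF f, of s "t - d"]) (use osc in \<open>auto intro: less_imp_le\<close>)
  next
    case False
    with s show ?thesis
      by (intro cadlag_abs_jump_le[OF f, of s t]) (use osc in \<open>auto intro: less_imp_le\<close>)
  qed
  then show "\<forall>\<^sub>F s in at t. dist (jump f s) 0 < e"
    unfolding eventually_at dist_real_def using d t e
    by (intro exI[of _ "min d t"]) force
qed

lemma eventually_eq_if_tendsto_nonzero:
  fixes g :: "'a::metric_space \<Rightarrow> 'b::real_normed_vector"
  assumes g: "(g \<longlongrightarrow> 0) (at t)" and s: "s \<longlonglongrightarrow> t"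
    and gs: "(\<lambda>n. g (s n)) \<longlonglongrightarrow> c" and c: "c \<noteq> 0"
  shows "\<forall>\<^sub>F n in sequentially. s n = t"
proof -
  have c2: "norm c / 2 > 0" using c by simp
  obtain d where d: "d > 0" "\<forall>x. x \<noteq> t \<and> dist x t < d \<longrightarrow> norm (g x) < norm c / 2"
    using tendstoD[OF g c2] unfolding eventually_at by auto
  show ?thesis
    using tendstoD[OF s d(1)] tendstoD[OF gs c2]
  proof eventually_elim
    case (elim n)
    have "norm c \<le> norm (g (s n)) + norm (g (s n) - c)"
      using norm_triangle_sub[of c "g (s n)"] by (simp add: norm_minus_commute)
    with elim d show ?case
      by (auto simp: dist_norm)
  qed
qed

lemma time_change_pos:
  assumes "time_change l" and "s > 0"
  shows "l s > 0"
  using assms unfolding time_change_def strict_mono_on_def by force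

lemma time_change_surj:
  assumes "time_change l" and "x \<ge> 0"
  obtains s where "s \<ge> 0" and "l s = x"
  using assms unfolding time_change_def by (metis atLeast_iff imageE)

lemma time_change_filterlim_at_left:
  assumes l: "time_change l" and s: "s > 0"
  shows "filterlim l (at_left (l s)) (at_left s)"
proof -
  have "continuous_on {0<..} l"
    using l unfolding time_change_def by (auto intro: continuous_on_subset)
  then have "isCont l s"
    using s continuous_on_eq_continuous_at[of "{0<..}" l] by auto
  then have "(l \<longlongrightarrow> l s) (at_left s)"
    by (simp add: isCont_def filterlim_at_split)
  moreover have "\<forall>\<^sub>F x in at_left s. l x < l s"
    using eventually_at_left_real[OF s]
    by (rule eventually_mono) (use l in \<open>auto simp: time_change_def strict_mono_on_def\<close>)
  ultimately show ?thesis
    by (auto simp: filterlim_at elim: eventually_mono)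
qed

lemma time_change_jump_close:
  fixes f q :: "real \<Rightarrow> real"
  assumes l: "time_change l" and q: "cadlag q" and s: "0 < s" "s \<le> T"
    and close: "\<forall>x\<in>{0..T}. \<bar>f (l x) - q x\<bar> \<le> e"
    and fL: "(f \<longlongrightarrow> L) (at_left (l s))"
  shows "\<bar>jump f (l s) - jump q s\<bar> \<le> 2 * e"
proof -
  have "((\<lambda>x. \<bar>f (l x) - q x\<bar>) \<longlongrightarrow> \<bar>L - (q s - jump q s)\<bar>) (at_left s)"
    by (intro tendsto_intros filterlim_compose[OF fL time_change_filterlim_at_left[OF l s(1)]]
        cadlag_tendsto_at_left[OF q s(1)])
  moreover have "\<forall>\<^sub>F x in at_left s. \<bar>f (l x) - q x\<bar> \<le> e"
    using eventually_at_left_real[OF s(1)] by (rule eventually_mono) (use close s in auto)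
  ultimately have "\<bar>L - (q s - jump q s)\<bar> \<le> e"
    by (rule tendsto_upperbound) simp
  moreover have "\<bar>f (l s) - q s\<bar> \<le> e"
    using close s by auto
  moreover have "jump f (l s) = f (l s) - L"
    by (rule jump_eq_if_tendsto_at_left[OF fL time_change_pos[OF l s(1)]])
  ultimately show ?thesis
    by linarith
qed

lemma time_change_preimage_tendsto:
  assumes lam: "\<And>n. time_change (lam n)"
    and lam_id: "\<And>e. e > 0 \<Longrightarrow> \<forall>\<^sub>F n in sequentially. \<forall>s\<ge>0. \<bar>lam n s - s\<bar> < e"
    and x: "x \<longlonglongrightarrow> t" "\<And>n. x n \<ge> 0"
  obtains s where "s \<longlonglongrightarrow> t" and "\<And>n. lam n (s n) = x n"
proof -
  define s where "s n = (SOME s. s \<ge> 0 \<and> lam n s = x n)" for n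
  have s: "s n \<ge> 0 \<and> lam n (s n) = x n" for n
    unfolding s_def by (rule someI_ex) (meson time_change_surj[OF lam x(2)])
  have "s \<longlonglongrightarrow> t"
  proof (rule tendstoI)
    fix e :: real
    assume "e > 0"
    then have e2: "e/2 > 0" by simp
    show "\<forall>\<^sub>F n in sequentially. dist (s n) t < e"
      using lam_id[OF e2] tendstoD[OF x(1) e2]
    proof eventually_elim
      case (elim n)
      then have "\<bar>x n - s n\<bar> < e/2"
        using s[of n] by metis
      with elim show ?case
        unfolding dist_real_def by linarith
    qed
  qed
  with s that show ?thesis by blast
qed

lemma J1_conv_jump_along:
  assumes J: "J1_conv fs q" and q: "cadlag q"
    and left: "\<And>n s. s > 0 \<Longrightarrow> \<exists>L. (fs n \<longlongrightarrow> L) (at_left s)"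
  obtains lam where "\<And>n. time_change (lam n)"
    and "\<And>e. e > 0 \<Longrightarrow> \<forall>\<^sub>F n in sequentially. \<forall>s\<ge>0. \<bar>lam n s - s\<bar> < e"
    and "\<And>s t. s \<longlonglongrightarrow> t \<Longrightarrow> t > 0 \<Longrightarrow>
           (\<lambda>n. jump (fs n) (lam n (s n)) - jump q (s n)) \<longlonglongrightarrow> 0"
proof -
  obtain lam where lam: "\<And>n. time_change (lam n)"
    and lam_id: "\<And>e. e > 0 \<Longrightarrow> \<forall>\<^sub>F n in sequentially. \<forall>s\<ge>0. \<bar>lam n s - s\<bar> < e"
    and close: "\<And>T e. T \<ge> 0 \<Longrightarrow> e > 0 \<Longrightarrow>
                  \<forall>\<^sub>F n in sequentially. \<forall>x\<in>{0..T}. \<bar>fs n (lam n x) - q x\<bar> < e"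
    using J unfolding J1_conv_def by blast
  have "(\<lambda>n. jump (fs n) (lam n (s n)) - jump q (s n)) \<longlonglongrightarrow> 0"
    if s: "s \<longlonglongrightarrow> t" and t: "t > 0" for s t
  proof (rule tendstoI)
    fix e :: real
    assume e: "e > 0"
    have "t + 1 \<ge> 0" "e/3 > 0" using t e by auto
    from close[OF this] order_tendstoD(1)[OF s t] order_tendstoD(2)[OF s less_add_one]
    show "\<forall>\<^sub>F n in sequentially. dist (jump (fs n) (lam n (s n)) - jump q (s n)) 0 < e"
    proof eventually_elim
      case (elim n)
      obtain L where "(fs n \<longlongrightarrow> L) (at_left (lam n (s n)))"
        using left time_change_pos[OF lam] elim by blast
      from time_change_jump_close[OF lam q _ _ _ this, of "t + 1" "e/3"] elim e
      show ?case by (force simp: dist_real_def)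
    qed
  qed
  with lam lam_id that show ?thesis by blast
qed

lemma J1_conv_jump_eq_if_jumps_concentrate:
  fixes fs :: "nat \<Rightarrow> real \<Rightarrow> real"
  assumes J: "J1_conv fs q" and q: "cadlag q" and t: "t > 0"
    and left: "\<And>n s. s > 0 \<Longrightarrow> \<exists>L. (fs n \<longlongrightarrow> L) (at_left s)"
    and tn: "tn \<longlonglongrightarrow> t" "\<And>n. tn n \<ge> 0"
    and at_tn: "(\<lambda>n. jump (fs n) (tn n)) \<longlonglongrightarrow> c"
    and off_tn: "\<And>e. e > 0 \<Longrightarrow> \<exists>d>0. \<forall>\<^sub>F n in sequentially.
                   \<forall>x. \<bar>x - t\<bar> < d \<longrightarrow> x \<noteq> tn n \<longrightarrow> \<bar>jump (fs n) x\<bar> \<le> e"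
  shows "jump q t = c"
proof -
  obtain lam where lam: "\<And>n. time_change (lam n)"
    and lam_id: "\<And>e. e > 0 \<Longrightarrow> \<forall>\<^sub>F n in sequentially. \<forall>s\<ge>0. \<bar>lam n s - s\<bar> < e"
    and along: "\<And>s t. s \<longlonglongrightarrow> t \<Longrightarrow> t > 0 \<Longrightarrow>
                  (\<lambda>n. jump (fs n) (lam n (s n)) - jump q (s n)) \<longlonglongrightarrow> 0"
    using J1_conv_jump_along[OF J q left] by blast
  show ?thesis
  proof (cases "c = 0")
    case True
    have lam_t: "(\<lambda>n. lam n t) \<longlonglongrightarrow> t"
      by (rule tendstoI, rule eventually_mono[OF lam_id]) (use t in \<open>auto simp: dist_real_def\<close>)
    have "(\<lambda>n. jump (fs n) (lam n t)) \<longlonglongrightarrow> jump q t"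
      using LIM_zero_cancel[OF along[OF tendsto_const t]] .
    moreover have "(\<lambda>n. jump (fs n) (lam n t)) \<longlonglongrightarrow> 0"
    proof (rule tendstoI)
      fix e :: real
      assume "e > 0"
      then have e2: "e/2 > 0" by simp
      obtain d where d: "d > 0" and small: "\<forall>\<^sub>F n in sequentially.
          \<forall>x. \<bar>x - t\<bar> < d \<longrightarrow> x \<noteq> tn n \<longrightarrow> \<bar>jump (fs n) x\<bar> \<le> e/2"
        using off_tn[OF e2] by blast
      show "\<forall>\<^sub>F n in sequentially. dist (jump (fs n) (lam n t)) 0 < e"
        using small tendstoD[OF lam_t d] tendstoD[OF at_tn e2]
      proof eventually_elim
        case (elim n)
        then show ?case
          using \<open>c = 0\<close> by (cases "lam n t = tn n") (auto simp: dist_real_def)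
      qed
    qed
    ultimately show ?thesis
      using True LIMSEQ_unique by blast
  next
    case False
    obtain s where s: "s \<longlonglongrightarrow> t" "\<And>n. lam n (s n) = tn n"
      using time_change_preimage_tendsto[OF lam lam_id tn] by blast
    have jump_s: "(\<lambda>n. jump q (s n)) \<longlonglongrightarrow> c"
      using tendsto_diff[OF at_tn along[OF s(1) t]] by (simp add: s(2))
    have "\<forall>\<^sub>F n in sequentially. jump q (s n) = jump q t"
      using eventually_eq_if_tendsto_nonzero[OF cadlag_jump_tendsto_0[OF q t] s(1) jump_s False]
      by (rule eventually_mono) simp
    with jump_s have "(\<lambda>n. jump q t) \<longlonglongrightarrow> c"
      by (rule Lim_transform_eventually)
    then show ?thesis
      by (simp add: LIMSEQ_const_iff)
  qed
qed

abbreviation qcov_increment ::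
    "(nat \<Rightarrow> nat \<Rightarrow> real) \<Rightarrow> nat \<Rightarrow> (real \<Rightarrow> real) \<Rightarrow> (real \<Rightarrow> real) \<Rightarrow> nat \<Rightarrow> real" where
  "qcov_increment pt n u v i \<equiv> (u (pt n (Suc i)) - u (pt n i)) * (v (pt n (Suc i)) - v (pt n i))"

lemma qcov_tendsto_at_left:
  "(qcov pt k n u v \<longlongrightarrow> (\<Sum>i\<in>{i. i < k n \<and> pt n i < s}. qcov_increment pt n u v i)) (at_left s)"
proof (rule tendsto_eventually)
  let ?A = "{i. i < k n \<and> pt n i < s}"
  have "\<forall>\<^sub>F x in at_left s. \<forall>i\<in>?A. pt n i < x"
    by (intro eventually_ball_finite ballI) (auto intro: eventually_mono[OF eventually_at_left_real])
  moreover have "\<forall>\<^sub>F x in at_left s. x < s"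
    by (simp add: eventually_at_filter)
  ultimately show "\<forall>\<^sub>F x in at_left s. qcov pt k n u v x = (\<Sum>i\<in>?A. qcov_increment pt n u v i)"
  proof eventually_elim
    case (elim x)
    then have "{i. i < k n \<and> pt n i \<le> x} = ?A" by force
    then show ?case unfolding qcov_def by simp
  qed
qed

lemma qcov_jump:
  assumes "s > 0"
  shows "jump (qcov pt k n u v) s = (\<Sum>i\<in>{i. i < k n \<and> pt n i = s}. qcov_increment pt n u v i)"
proof -
  have split: "{i. i < k n \<and> pt n i \<le> s} = {i. i < k n \<and> pt n i < s} \<union> {i. i < k n \<and> pt n i = s}"
    by auto
  have "qcov pt k n u v s = (\<Sum>i\<in>{i. i < k n \<and> pt n i < s}. qcov_increment pt n u v i)
      + (\<Sum>i\<in>{i. i < k n \<and> pt n i = s}. qcov_increment pt n u v i)"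
    unfolding qcov_def split by (rule sum.union_disjoint) auto
  then show ?thesis
    using jump_eq_if_tendsto_at_left[OF qcov_tendsto_at_left assms] by simp
qed

lemma qcov_jump_partition_point:
  assumes ps: "partition_seq pt k" and "pt n j > 0" and "j < k n"
  shows "jump (qcov pt k n u v) (pt n j) = qcov_increment pt n u v j"
proof -
  have "i = j" if "i < k n" "pt n i = pt n j" for i
    using partition_seq_less[OF ps, of i j n] partition_seq_less[OF ps, of j i n] that assms(3)
    by (metis linorder_neqE_nat less_imp_le order_less_irrefl)
  then have "{i. i < k n \<and> pt n i = pt n j} = {j}"
    using assms(3) by auto
  then show ?thesis
    using qcov_jump[OF assms(2)] by simp
qed

lemma qcov_jump_eq_0:
  assumes "\<forall>j<k n. pt n j \<noteq> s"
  shows "jump (qcov pt k n u v) s = 0"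
proof (cases "s > 0")
  case True
  have none: "{i. i < k n \<and> pt n i = s} = {}"
    using assms by auto
  show ?thesis
    by (simp only: qcov_jump[OF True] none sum.empty)
qed (simp add: jump_def)

lemma qcov_jump_last_before_tendsto:
  assumes ps: "partition_seq pt k" and t: "t > 0" and u: "cadlag u" and v: "cadlag v"
  shows "(\<lambda>n. jump (qcov pt k n u v) (pt n (last_before pt k t n))) \<longlonglongrightarrow> jump u t * jump v t"
proof -
  let ?a = "\<lambda>n. pt n (last_before pt k t n)" and ?b = "\<lambda>n. pt n (Suc (last_before pt k t n))"
  have a: "filterlim ?a (at_left t) sequentially"
    using last_before_tendsto(1)[OF ps t] last_before(2)[OF ps t]
    unfolding filterlim_at by (auto intro!: always_eventually simp: less_imp_neq)
  have b: "\<forall>\<^sub>F n in sequentially. ?b n \<ge> t"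
    using eventually_last_before_straddles[OF ps t] by (rule eventually_mono) blast
  have "(\<lambda>n. qcov_increment pt n u v (last_before pt k t n)) \<longlonglongrightarrow> jump u t * jump v t"
    by (intro tendsto_mult cadlag_increment_tendsto_jump u v t a b last_before_tendsto(2)[OF ps t])
  moreover have "\<forall>\<^sub>F n in sequentially.
      qcov_increment pt n u v (last_before pt k t n) = jump (qcov pt k n u v) (?a n)"
    using eventually_last_before_straddles[OF ps t] order_tendstoD(1)[OF last_before_tendsto(1)[OF ps t] t]
    by eventually_elim (simp add: qcov_jump_partition_point[OF ps])
  ultimately show ?thesis
    by (rule Lim_transform_eventually)
qed

lemma qcov_jump_small_near:
  assumes ps: "partition_seq pt k" and t: "t > 0" and u: "cadlag u" and v: "cadlag v"
    and e: "e > 0"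
  shows "\<exists>d>0. \<forall>\<^sub>F n in sequentially. \<forall>x. \<bar>x - t\<bar> < d \<longrightarrow>
           x \<noteq> pt n (last_before pt k t n) \<longrightarrow> \<bar>jump (qcov pt k n u v) x\<bar> \<le> e"
proof -
  define r where "r = sqrt e"
  have r: "r > 0" "r * r = e"
    using e unfolding r_def by simp_all
  obtain du where du: "du > 0" and osc_u: "\<And>x y. (x \<in> {t-du<..<t} \<and> y \<in> {t-du<..<t}) \<or>
      (x \<in> {t..<t+du} \<and> y \<in> {t..<t+du}) \<Longrightarrow> \<bar>u x - u y\<bar> < r"
    using cadlag_oscillation_small[OF u t r(1)] by blast
  obtain dv where dv: "dv > 0" and osc_v: "\<And>x y. (x \<in> {t-dv<..<t} \<and> y \<in> {t-dv<..<t}) \<or>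
      (x \<in> {t..<t+dv} \<and> y \<in> {t..<t+dv}) \<Longrightarrow> \<bar>v x - v y\<bar> < r"
    using cadlag_oscillation_small[OF v t r(1)] by blast
  define D where "D = min du dv"
  have D: "D > 0" "D \<le> du" "D \<le> dv"
    using du dv unfolding D_def by auto
  have "\<forall>\<^sub>F n in sequentially. \<forall>x. \<bar>x - t\<bar> < D/2 \<longrightarrow>
           x \<noteq> pt n (last_before pt k t n) \<longrightarrow> \<bar>jump (qcov pt k n u v) x\<bar> \<le> e"
    using partition_interval_one_sided[OF ps t D(1)]
  proof (rule eventually_mono, intro allI impI)
    fix n x
    assume one_sided: "\<forall>j<k n. \<bar>pt n j - t\<bar> < D/2 \<longrightarrow> j \<noteq> last_before pt k t n \<longrightarrow>
           (pt n j \<in> {t-D<..<t} \<and> pt n (Suc j) \<in> {t-D<..<t}) \<or>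
           (pt n j \<in> {t..<t+D} \<and> pt n (Suc j) \<in> {t..<t+D})"
      and x: "\<bar>x - t\<bar> < D/2" "x \<noteq> pt n (last_before pt k t n)"
    consider "x \<le> 0" | "\<forall>j<k n. pt n j \<noteq> x" | j where "x > 0" "j < k n" "pt n j = x"
      by force
    then show "\<bar>jump (qcov pt k n u v) x\<bar> \<le> e"
    proof cases
      case 1
      then show ?thesis using e by (simp add: jump_def)
    next
      case 2
      then show ?thesis using e by (simp add: qcov_jump_eq_0)
    next
      case 3
      then have "\<bar>u (pt n (Suc j)) - u (pt n j)\<bar> < r" "\<bar>v (pt n (Suc j)) - v (pt n j)\<bar> < r"
        using one_sided x D by (auto intro!: osc_u osc_v)
      then have "\<bar>qcov_increment pt n u v j\<bar> \<le> r * r"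
        unfolding abs_mult by (intro mult_mono) auto
      moreover have "jump (qcov pt k n u v) x = qcov_increment pt n u v j"
        using qcov_jump_partition_point[OF ps, of n j] 3 by simp
      ultimately show ?thesis
        using r(2) by simp
    qed
  qed
  then show ?thesis
    using D(1) by (intro exI[of _ "D/2"]) simp
qed

theorem lemma3p3:
  fixes pt :: "nat \<Rightarrow> nat \<Rightarrow> real" and k :: "nat \<Rightarrow> nat" and t :: real
  assumes "partition_seq pt k" and "t > 0"
  shows "\<exists>tn :: nat \<Rightarrow> real. tn \<longlonglongrightarrow> t \<and>
    (\<forall>u v. cadlag u \<longrightarrow> cadlag v \<longrightarrow>
       (\<forall>q. cadlag q \<longrightarrow> J1_conv (\<lambda>n. qcov pt k n u v) q \<longrightarrow>
          (\<lambda>n. jump (qcov pt k n u v) (tn n)) \<longlonglongrightarrow> jump q t))"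
proof -
  note ps = assms(1) and t = assms(2)
  define tn where "tn n = pt n (last_before pt k t n)" for n
  have tn: "tn \<longlonglongrightarrow> t" "tn n \<ge> 0" for n
    unfolding tn_def using last_before_tendsto(1)[OF ps t]
      partition_seq_nonneg[OF ps last_before(1)[OF ps t]] by auto
  show ?thesis
  proof (intro exI[of _ tn] conjI allI impI)
    fix u v q
    assume u: "cadlag u" and v: "cadlag v" and q: "cadlag q"
      and J: "J1_conv (\<lambda>n. qcov pt k n u v) q"
    have at_tn: "(\<lambda>n. jump (qcov pt k n u v) (tn n)) \<longlonglongrightarrow> jump u t * jump v t"
      unfolding tn_def by (rule qcov_jump_last_before_tendsto[OF ps t u v])
    have "jump q t = jump u t * jump v t"
      using qcov_jump_small_near[OF ps t u v] unfolding tn_def[symmetric]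
      by (intro J1_conv_jump_eq_if_jumps_concentrate[OF J q t _ tn at_tn])
        (auto intro: qcov_tendsto_at_left)
    with at_tn show "(\<lambda>n. jump (qcov pt k n u v) (tn n)) \<longlonglongrightarrow> jump q t"
      by simp
  qed (rule tn)
qed

end
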